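(* Let $\mathcal{W}$ be a weakly exact structure on an additive category $\mathcal{A}$ and let \[\begin{array}{ccc} A & \xrightarrow{i} & B\\ {\scriptstyle f}\downarrow & & \downarrow{\scriptstyle f'}\\ A' & \xrightarrow{i'} & B'\end{array}\] be a commutative square in which $i$ and $i'$ are admissible monics of $\mathcal{W}$. Then the following are equivalent: (i) the square is a pushout; (ii) the sequence $A\xrightarrow{\left[\begin{smallmatrix} i\\ -f\end{smallmatrix}\right]} B\oplus A'\xrightarrow{[f'\ \ i']} B'$ is a short exact sequence belonging to $\mathcal{W}$; (iii) the square is both a pushout and a pullback; (iv) there is a commutative diagram whose rows $A\xrightarrow{i}B\xrightarrow{p}C$ and $A'\xrightarrow{i'}B'\xrightarrow{p'}C$ belong to $\mathcal{W}$ and whose vertical maps are $f$, $f'$ and $1_C$. The dual statement (for admissible epics and pullbacks) also holds.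
   Context: Let $\mathcal{A}$ be an additive category. A kernel-cokernel pair (short exact sequence) is a pair of composable morphisms $A\xrightarrow{i}B\xrightarrow{d}C$ with $i$ a kernel of $d$ and $d$ a cokernel of $i$. A weakly exact structure on $\mathcal{A}$ is a class $\mathcal{W}$ of kernel-cokernel pairs, closed under isomorphisms of sequences and under finite direct sums of sequences, such that, calling $i$ an admissible monic (resp. $d$ an admissible epic) if $(i,d)\in\mathcal{W}$ for some $d$ (resp. some $i$): (E0) $1_A$ is an admissible monic for every object $A$; (E0)$^{op}$ $1_A$ is an admissible epic for every object $A$; (E2) for every admissible monic $i:A\to B$ and every morphism $t:A\to C$ the pushout of $i$ along $t$ exists and the resulting morphism $C\to S$ is an admissible monic; (E2)$^{op}$ for every admissible epic $h:A\to C$ and every morphism $t:B\to C$ the pullback of $h$ along $t$ exists and the resulting morphism $P\to B$ is an admissible epic. *)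

theory Defs
  imports Main
begin

text \<open>An additive category, presented by its data: objects, morphisms with
source/target, composition (cmp C g f is g after f), identities, the abelian
group structure on hom-sets, and chosen binary biproducts with injections and
projections.\<close>

record ('o, 'm) addcat =
  Ob   :: "'o set"
  Mor  :: "'m set"
  src  :: "'m \<Rightarrow> 'o"
  tgt  :: "'m \<Rightarrow> 'o"
  cmp  :: "'m \<Rightarrow> 'm \<Rightarrow> 'm"
  idm  :: "'o \<Rightarrow> 'm"
  madd :: "'m \<Rightarrow> 'm \<Rightarrow> 'm"
  mneg :: "'m \<Rightarrow> 'm"
  zer  :: "'o \<Rightarrow> 'o \<Rightarrow> 'm"
  bsum :: "'o \<Rightarrow> 'o \<Rightarrow> 'o"
  bin1 :: "'o \<Rightarrow> 'o \<Rightarrow> 'm"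
  bin2 :: "'o \<Rightarrow> 'o \<Rightarrow> 'm"
  bpr1 :: "'o \<Rightarrow> 'o \<Rightarrow> 'm"
  bpr2 :: "'o \<Rightarrow> 'o \<Rightarrow> 'm"

definition Hom :: "('o, 'm, 'x) addcat_scheme \<Rightarrow> 'o \<Rightarrow> 'o \<Rightarrow> 'm set" where
  "Hom C A B = {f \<in> Mor C. src C f = A \<and> tgt C f = B}"

definition additive_category :: "('o, 'm, 'x) addcat_scheme \<Rightarrow> bool" where
  "additive_category C \<longleftrightarrow>
     (\<forall>f\<in>Mor C. src C f \<in> Ob C \<and> tgt C f \<in> Ob C) \<and>
     (\<forall>A\<in>Ob C. idm C A \<in> Hom C A A) \<and>
     (\<forall>A B D f g. f \<in> Hom C A B \<longrightarrow> g \<in> Hom C B D \<longrightarrow> cmp C g f \<in> Hom C A D) \<and>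
     (\<forall>A B D E f g h. f \<in> Hom C A B \<longrightarrow> g \<in> Hom C B D \<longrightarrow> h \<in> Hom C D E \<longrightarrow>
         cmp C h (cmp C g f) = cmp C (cmp C h g) f) \<and>
     (\<forall>A B f. f \<in> Hom C A B \<longrightarrow> cmp C (idm C B) f = f \<and> cmp C f (idm C A) = f) \<and>
     \<comment> \<open>each hom-set is an abelian group\<close>
     (\<forall>A\<in>Ob C. \<forall>B\<in>Ob C. zer C A B \<in> Hom C A B) \<and>
     (\<forall>A B f g. f \<in> Hom C A B \<longrightarrow> g \<in> Hom C A B \<longrightarrow>
         madd C f g \<in> Hom C A B \<and> madd C f g = madd C g f) \<and>
     (\<forall>A B f g h. f \<in> Hom C A B \<longrightarrow> g \<in> Hom C A B \<longrightarrow> h \<in> Hom C A B \<longrightarrow>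
         madd C (madd C f g) h = madd C f (madd C g h)) \<and>
     (\<forall>A B f. f \<in> Hom C A B \<longrightarrow>
         mneg C f \<in> Hom C A B \<and> madd C f (zer C A B) = f \<and> madd C f (mneg C f) = zer C A B) \<and>
     \<comment> \<open>composition is bilinear\<close>
     (\<forall>A B D f g h. f \<in> Hom C A B \<longrightarrow> g \<in> Hom C A B \<longrightarrow> h \<in> Hom C B D \<longrightarrow>
         cmp C h (madd C f g) = madd C (cmp C h f) (cmp C h g)) \<and>
     (\<forall>E A B f g k. f \<in> Hom C A B \<longrightarrow> g \<in> Hom C A B \<longrightarrow> k \<in> Hom C E A \<longrightarrow>
         cmp C (madd C f g) k = madd C (cmp C f k) (cmp C g k)) \<and>
     \<comment> \<open>a zero object\<close>
     (\<exists>Z\<in>Ob C. \<forall>A\<in>Ob C. (\<exists>!f. f \<in> Hom C Z A) \<and> (\<exists>!f. f \<in> Hom C A Z)) \<and>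
     \<comment> \<open>binary biproducts\<close>
     (\<forall>A\<in>Ob C. \<forall>B\<in>Ob C. bsum C A B \<in> Ob C \<and>
         bin1 C A B \<in> Hom C A (bsum C A B) \<and> bin2 C A B \<in> Hom C B (bsum C A B) \<and>
         bpr1 C A B \<in> Hom C (bsum C A B) A \<and> bpr2 C A B \<in> Hom C (bsum C A B) B \<and>
         cmp C (bpr1 C A B) (bin1 C A B) = idm C A \<and>
         cmp C (bpr2 C A B) (bin2 C A B) = idm C B \<and>
         cmp C (bpr1 C A B) (bin2 C A B) = zer C B A \<and>
         cmp C (bpr2 C A B) (bin1 C A B) = zer C A B \<and>
         madd C (cmp C (bin1 C A B) (bpr1 C A B)) (cmp C (bin2 C A B) (bpr2 C A B))
           = idm C (bsum C A B))"

definition iso :: "('o, 'm, 'x) addcat_scheme \<Rightarrow> 'm \<Rightarrow> bool" where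
  "iso C f \<longleftrightarrow> f \<in> Mor C \<and> (\<exists>g \<in> Hom C (tgt C f) (src C f).
      cmp C g f = idm C (src C f) \<and> cmp C f g = idm C (tgt C f))"

definition is_kernel :: "('o, 'm, 'x) addcat_scheme \<Rightarrow> 'm \<Rightarrow> 'm \<Rightarrow> bool" where
  "is_kernel C i d \<longleftrightarrow> i \<in> Mor C \<and> d \<in> Mor C \<and> tgt C i = src C d \<and>
     cmp C d i = zer C (src C i) (tgt C d) \<and>
     (\<forall>X\<in>Ob C. \<forall>g \<in> Hom C X (src C d). cmp C d g = zer C X (tgt C d) \<longrightarrow>
        (\<exists>!h. h \<in> Hom C X (src C i) \<and> cmp C i h = g))"

definition is_cokernel :: "('o, 'm, 'x) addcat_scheme \<Rightarrow> 'm \<Rightarrow> 'm \<Rightarrow> bool" where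
  "is_cokernel C d i \<longleftrightarrow> i \<in> Mor C \<and> d \<in> Mor C \<and> tgt C i = src C d \<and>
     cmp C d i = zer C (src C i) (tgt C d) \<and>
     (\<forall>X\<in>Ob C. \<forall>g \<in> Hom C (tgt C i) X. cmp C g i = zer C (src C i) X \<longrightarrow>
        (\<exists>!h. h \<in> Hom C (tgt C d) X \<and> cmp C h d = g))"

definition kc_pair :: "('o, 'm, 'x) addcat_scheme \<Rightarrow> 'm \<Rightarrow> 'm \<Rightarrow> bool" where
  "kc_pair C i d \<longleftrightarrow> is_kernel C i d \<and> is_cokernel C d i"

definition msum :: "('o, 'm, 'x) addcat_scheme \<Rightarrow> 'm \<Rightarrow> 'm \<Rightarrow> 'm" where
  "msum C f g = madd C
     (cmp C (bin1 C (tgt C f) (tgt C g)) (cmp C f (bpr1 C (src C f) (src C g))))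
     (cmp C (bin2 C (tgt C f) (tgt C g)) (cmp C g (bpr2 C (src C f) (src C g))))"

text \<open>Pushout square: t' \<circ> i = j \<circ> t, with i : A \<rightarrow> B, t : A \<rightarrow> D, t' : B \<rightarrow> S, j : D \<rightarrow> S.\<close>
definition is_pushout :: "('o, 'm, 'x) addcat_scheme \<Rightarrow> 'm \<Rightarrow> 'm \<Rightarrow> 'm \<Rightarrow> 'm \<Rightarrow> bool" where
  "is_pushout C i t t' j \<longleftrightarrow> i \<in> Mor C \<and> t \<in> Mor C \<and> t' \<in> Mor C \<and> j \<in> Mor C \<and>
     src C t = src C i \<and> src C t' = tgt C i \<and> src C j = tgt C t \<and> tgt C j = tgt C t' \<and>
     cmp C t' i = cmp C j t \<and>
     (\<forall>X\<in>Ob C. \<forall>u \<in> Hom C (tgt C i) X. \<forall>v \<in> Hom C (tgt C t) X.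
        cmp C u i = cmp C v t \<longrightarrow>
        (\<exists>!w. w \<in> Hom C (tgt C t') X \<and> cmp C w t' = u \<and> cmp C w j = v))"

text \<open>Pullback square: h \<circ> q = t \<circ> p, with h : A \<rightarrow> E, t : B \<rightarrow> E, q : P \<rightarrow> A, p : P \<rightarrow> B.\<close>
definition is_pullback :: "('o, 'm, 'x) addcat_scheme \<Rightarrow> 'm \<Rightarrow> 'm \<Rightarrow> 'm \<Rightarrow> 'm \<Rightarrow> bool" where
  "is_pullback C h t q p \<longleftrightarrow> h \<in> Mor C \<and> t \<in> Mor C \<and> q \<in> Mor C \<and> p \<in> Mor C \<and>
     tgt C t = tgt C h \<and> tgt C q = src C h \<and> tgt C p = src C t \<and> src C p = src C q \<and>
     cmp C h q = cmp C t p \<and>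
     (\<forall>X\<in>Ob C. \<forall>u \<in> Hom C X (src C h). \<forall>v \<in> Hom C X (src C t).
        cmp C h u = cmp C t v \<longrightarrow>
        (\<exists>!w. w \<in> Hom C X (src C q) \<and> cmp C q w = u \<and> cmp C p w = v))"

definition adm_monic :: "('o, 'm, 'x) addcat_scheme \<Rightarrow> ('m \<times> 'm) set \<Rightarrow> 'm \<Rightarrow> bool" where
  "adm_monic C W i \<longleftrightarrow> (\<exists>d. (i, d) \<in> W)"

definition adm_epic :: "('o, 'm, 'x) addcat_scheme \<Rightarrow> ('m \<times> 'm) set \<Rightarrow> 'm \<Rightarrow> bool" where
  "adm_epic C W d \<longleftrightarrow> (\<exists>i. (i, d) \<in> W)"

definition weakly_exact :: "('o, 'm, 'x) addcat_scheme \<Rightarrow> ('m \<times> 'm) set \<Rightarrow> bool" where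
  "weakly_exact C W \<longleftrightarrow>
     (\<forall>(i, d) \<in> W. kc_pair C i d) \<and>
     \<comment> \<open>closed under isomorphisms of sequences\<close>
     (\<forall>(i, d) \<in> W. \<forall>i' d' a b c. kc_pair C i' d' \<and> iso C a \<and> iso C b \<and> iso C c \<and>
        a \<in> Hom C (src C i) (src C i') \<and> b \<in> Hom C (tgt C i) (tgt C i') \<and>
        c \<in> Hom C (tgt C d) (tgt C d') \<and>
        cmp C b i = cmp C i' a \<and> cmp C c d = cmp C d' b \<longrightarrow> (i', d') \<in> W) \<and>
     \<comment> \<open>closed under (binary) direct sums\<close>
     (\<forall>(i1, d1) \<in> W. \<forall>(i2, d2) \<in> W. (msum C i1 i2, msum C d1 d2) \<in> W) \<and>
     \<comment> \<open>(E0) and (E0)op\<close>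
     (\<forall>A\<in>Ob C. adm_monic C W (idm C A)) \<and>
     (\<forall>A\<in>Ob C. adm_epic C W (idm C A)) \<and>
     \<comment> \<open>(E2): pushouts of admissible monics exist and are admissible monics\<close>
     (\<forall>i t. adm_monic C W i \<and> t \<in> Mor C \<and> src C t = src C i \<longrightarrow>
        (\<exists>t' j. is_pushout C i t t' j) \<and>
        (\<forall>t' j. is_pushout C i t t' j \<longrightarrow> adm_monic C W j)) \<and>
     \<comment> \<open>(E2)op: pullbacks of admissible epics exist and are admissible epics\<close>
     (\<forall>h t. adm_epic C W h \<and> t \<in> Mor C \<and> tgt C t = tgt C h \<longrightarrow>
        (\<exists>q p. is_pullback C h t q p) \<and>
        (\<forall>q p. is_pullback C h t q p \<longrightarrow> adm_epic C W p))"

end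

theory Submission
  imports Defs
begin

text \<open>Write \<open>\<mu> = [i; -f] : A \<rightarrow> B \<oplus> A'\<close> and \<open>\<epsilon> = [f' i'] : B \<oplus> A' \<rightarrow> B'\<close>. The square
commutes iff \<open>\<epsilon> \<mu> = 0\<close>; it is a pushout iff \<open>\<epsilon>\<close> is a cokernel of \<open>\<mu>\<close> and a pullback
iff \<open>\<mu>\<close> is a kernel of \<open>\<epsilon>\<close>, so (ii) gives (iii).
If the square is a pushout and \<open>p'\<close> is the admissible cokernel of \<open>i'\<close>, the pushout property
makes \<open>p' f'\<close> a cokernel of \<open>i\<close>; since a kernel-cokernel pair isomorphic to one in \<open>\<W>\<close> lies in
\<open>\<W>\<close>, this gives (iv).
Conversely, given (iv), the square formed by \<open>p\<close>, \<open>p'\<close>, the projection \<open>B \<oplus> A' \<rightarrow> B\<close> and \<open>\<epsilon>\<close>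
is a pullback, so \<open>\<epsilon>\<close> is an admissible epic by (E2)op; as \<open>\<mu>\<close> is a kernel of \<open>\<epsilon>\<close>, this
gives (ii).
The dual statement is the primal one for the opposite category, where the pairs
\<open>(d, i)\<close> with \<open>(i, d) \<in> \<W>\<close> again form a weakly exact structure.\<close>

lemma ex1_unique: "\<exists>!x. P x \<Longrightarrow> P a \<Longrightarrow> P b \<Longrightarrow> a = b"
  by blast

lemma kernelI:
  assumes "k \<in> Hom C K B" "d \<in> Hom C B D" "cmp C d k = zer C K D"
   "\<And>X g. X \<in> Ob C \<Longrightarrow> g \<in> Hom C X B \<Longrightarrow> cmp C d g = zer C X D \<Longrightarrow> \<exists>h\<in>Hom C X K. cmp C k h = g"
   "\<And>X h1 h2. h1 \<in> Hom C X K \<Longrightarrow> h2 \<in> Hom C X K \<Longrightarrow> cmp C k h1 = cmp C k h2 \<Longrightarrow> h1 = h2"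
  shows "is_kernel C k d"
proof -
  have hh: "k \<in> Mor C" "d \<in> Mor C" "src C k = K" "tgt C k = B" "src C d = B" "tgt C d = D"
    using assms(1,2) by (auto simp: Hom_def)
  show ?thesis
    unfolding is_kernel_def
  proof (intro conjI ballI impI ex_ex1I)
    fix X g assume "X \<in> Ob C" "g \<in> Hom C X (src C d)" "cmp C d g = zer C X (tgt C d)"
    with assms(4)[of X g] hh show "\<exists>h. h \<in> Hom C X (src C k) \<and> cmp C k h = g" by auto
  qed (use hh assms(3,5) in auto)
qed

lemma cokernelI:
  assumes "k \<in> Hom C K B" "d \<in> Hom C B D" "cmp C d k = zer C K D"
   "\<And>X g. X \<in> Ob C \<Longrightarrow> g \<in> Hom C B X \<Longrightarrow> cmp C g k = zer C K X \<Longrightarrow> \<exists>h\<in>Hom C D X. cmp C h d = g"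
   "\<And>X h1 h2. h1 \<in> Hom C D X \<Longrightarrow> h2 \<in> Hom C D X \<Longrightarrow> cmp C h1 d = cmp C h2 d \<Longrightarrow> h1 = h2"
  shows "is_cokernel C d k"
proof -
  have hh: "k \<in> Mor C" "d \<in> Mor C" "src C k = K" "tgt C k = B" "src C d = B" "tgt C d = D"
    using assms(1,2) by (auto simp: Hom_def)
  show ?thesis
    unfolding is_cokernel_def
  proof (intro conjI ballI impI ex_ex1I)
    fix X g assume "X \<in> Ob C" "g \<in> Hom C (tgt C k) X" "cmp C g k = zer C (src C k) X"
    with assms(4)[of X g] hh show "\<exists>h. h \<in> Hom C (tgt C d) X \<and> cmp C h d = g" by auto
  qed (use hh assms(3,5) in auto)
qed

lemma pushoutI:
  assumes "i \<in> Hom C A B" "t \<in> Hom C A D" "t' \<in> Hom C B S" "j \<in> Hom C D S"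
    "cmp C t' i = cmp C j t"
    "\<And>X u v. X \<in> Ob C \<Longrightarrow> u \<in> Hom C B X \<Longrightarrow> v \<in> Hom C D X \<Longrightarrow> cmp C u i = cmp C v t \<Longrightarrow>
        \<exists>w \<in> Hom C S X. cmp C w t' = u \<and> cmp C w j = v"
    "\<And>X w1 w2. w1 \<in> Hom C S X \<Longrightarrow> w2 \<in> Hom C S X \<Longrightarrow> cmp C w1 t' = cmp C w2 t' \<Longrightarrow>
        cmp C w1 j = cmp C w2 j \<Longrightarrow> w1 = w2"
  shows "is_pushout C i t t' j"
proof -
  have hh: "i \<in> Mor C" "t \<in> Mor C" "t' \<in> Mor C" "j \<in> Mor C" "src C i = A" "tgt C i = B"
    "src C t = A" "tgt C t = D" "src C t' = B" "tgt C t' = S" "src C j = D" "tgt C j = S"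
    using assms(1-4) by (auto simp: Hom_def)
  show ?thesis
    unfolding is_pushout_def
  proof (intro conjI ballI impI ex_ex1I)
    fix X u v assume "X \<in> Ob C" "u \<in> Hom C (tgt C i) X" "v \<in> Hom C (tgt C t) X" "cmp C u i = cmp C v t"
    with assms(6)[of X u v] hh
    show "\<exists>w. w \<in> Hom C (tgt C t') X \<and> cmp C w t' = u \<and> cmp C w j = v" by auto
  qed (use hh assms(5,7) in auto)
qed

lemma pullbackI:
  assumes "h \<in> Hom C P1 E" "t \<in> Hom C P2 E" "q \<in> Hom C P P1" "p \<in> Hom C P P2"
    "cmp C h q = cmp C t p"
    "\<And>X u v. X \<in> Ob C \<Longrightarrow> u \<in> Hom C X P1 \<Longrightarrow> v \<in> Hom C X P2 \<Longrightarrow> cmp C h u = cmp C t v \<Longrightarrow>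
        \<exists>w \<in> Hom C X P. cmp C q w = u \<and> cmp C p w = v"
    "\<And>X w1 w2. w1 \<in> Hom C X P \<Longrightarrow> w2 \<in> Hom C X P \<Longrightarrow> cmp C q w1 = cmp C q w2 \<Longrightarrow>
        cmp C p w1 = cmp C p w2 \<Longrightarrow> w1 = w2"
  shows "is_pullback C h t q p"
proof -
  have hh: "h \<in> Mor C" "t \<in> Mor C" "q \<in> Mor C" "p \<in> Mor C" "src C h = P1" "tgt C h = E"
    "src C t = P2" "tgt C t = E" "src C q = P" "tgt C q = P1" "src C p = P" "tgt C p = P2"
    using assms(1-4) by (auto simp: Hom_def)
  show ?thesis
    unfolding is_pullback_def
  proof (intro conjI ballI impI ex_ex1I)
    fix X u v assume "X \<in> Ob C" "u \<in> Hom C X (src C h)" "v \<in> Hom C X (src C t)" "cmp C h u = cmp C t v"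
    with assms(6)[of X u v] hh
    show "\<exists>w. w \<in> Hom C X (src C q) \<and> cmp C q w = u \<and> cmp C p w = v" by auto
  qed (use hh assms(5,7) in auto)
qed

lemma is_kernelD:
  "is_kernel C k d \<Longrightarrow> X \<in> Ob C \<Longrightarrow> g \<in> Hom C X (src C d) \<Longrightarrow> cmp C d g = zer C X (tgt C d) \<Longrightarrow>
   \<exists>!h. h \<in> Hom C X (src C k) \<and> cmp C k h = g"
  unfolding is_kernel_def by blast

lemma is_cokernelD:
  "is_cokernel C d k \<Longrightarrow> X \<in> Ob C \<Longrightarrow> g \<in> Hom C (tgt C k) X \<Longrightarrow> cmp C g k = zer C (src C k) X \<Longrightarrow>
   \<exists>!h. h \<in> Hom C (tgt C d) X \<and> cmp C h d = g"
  unfolding is_cokernel_def by blast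

lemma is_pushoutD:
  "is_pushout C i t t' j \<Longrightarrow> X \<in> Ob C \<Longrightarrow> u \<in> Hom C (tgt C i) X \<Longrightarrow> v \<in> Hom C (tgt C t) X \<Longrightarrow>
   cmp C u i = cmp C v t \<Longrightarrow> \<exists>!w. w \<in> Hom C (tgt C t') X \<and> cmp C w t' = u \<and> cmp C w j = v"
  unfolding is_pushout_def by blast

section \<open>Additive categories\<close>

locale additive =
  fixes C :: "('o, 'm, 'x) addcat_scheme"
  assumes additive: "additive_category C"
begin

abbreviation cp (infixl "\<cdot>" 70) where "g \<cdot> f \<equiv> cmp C g f"
abbreviation ad (infixl "\<oplus>" 65) where "f \<oplus> g \<equiv> madd C f g"
abbreviation ng where "ng f \<equiv> mneg C f"
abbreviation Z where "Z A B \<equiv> zer C A B"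

lemma hom_mor: "f \<in> Hom C A B \<Longrightarrow> f \<in> Mor C" by (simp add: Hom_def)
lemma hom_src: "f \<in> Hom C A B \<Longrightarrow> src C f = A" by (simp add: Hom_def)
lemma hom_tgt: "f \<in> Hom C A B \<Longrightarrow> tgt C f = B" by (simp add: Hom_def)
lemma mor_hom: "f \<in> Mor C \<Longrightarrow> f \<in> Hom C (src C f) (tgt C f)" by (simp add: Hom_def)

lemma mor_ob: "f \<in> Mor C \<Longrightarrow> src C f \<in> Ob C \<and> tgt C f \<in> Ob C"
  using additive by (simp add: additive_category_def)
lemma id_hom: "A \<in> Ob C \<Longrightarrow> idm C A \<in> Hom C A A"
  using additive by (simp add: additive_category_def)
lemma comp_hom: "f \<in> Hom C A B \<Longrightarrow> g \<in> Hom C B D \<Longrightarrow> g \<cdot> f \<in> Hom C A D"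
  using additive by (simp add: additive_category_def)
lemma comp_assoc:
  "f \<in> Hom C A B \<Longrightarrow> g \<in> Hom C B D \<Longrightarrow> h \<in> Hom C D E \<Longrightarrow> h \<cdot> (g \<cdot> f) = (h \<cdot> g) \<cdot> f"
  using additive by (simp add: additive_category_def)
lemma id_left: "f \<in> Hom C A B \<Longrightarrow> idm C B \<cdot> f = f"
  using additive by (simp add: additive_category_def)
lemma id_right: "f \<in> Hom C A B \<Longrightarrow> f \<cdot> idm C A = f"
  using additive by (simp add: additive_category_def)
lemma zero_hom: "A \<in> Ob C \<Longrightarrow> B \<in> Ob C \<Longrightarrow> Z A B \<in> Hom C A B"
  using additive by (simp add: additive_category_def)
lemma add_hom: "f \<in> Hom C A B \<Longrightarrow> g \<in> Hom C A B \<Longrightarrow> f \<oplus> g \<in> Hom C A B"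
  using additive by (simp add: additive_category_def)
lemma add_comm: "f \<in> Hom C A B \<Longrightarrow> g \<in> Hom C A B \<Longrightarrow> f \<oplus> g = g \<oplus> f"
  using additive by (simp add: additive_category_def)
lemma add_assoc:
  "f \<in> Hom C A B \<Longrightarrow> g \<in> Hom C A B \<Longrightarrow> h \<in> Hom C A B \<Longrightarrow> (f \<oplus> g) \<oplus> h = f \<oplus> (g \<oplus> h)"
  using additive by (simp add: additive_category_def)
lemma neg_hom: "f \<in> Hom C A B \<Longrightarrow> ng f \<in> Hom C A B"
  using additive by (simp add: additive_category_def)
lemma add_zero: "f \<in> Hom C A B \<Longrightarrow> f \<oplus> Z A B = f"
  using additive by (simp add: additive_category_def)
lemma add_neg: "f \<in> Hom C A B \<Longrightarrow> f \<oplus> ng f = Z A B"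
  using additive by (simp add: additive_category_def)
lemma comp_add_distrib_left:
  "f \<in> Hom C A B \<Longrightarrow> g \<in> Hom C A B \<Longrightarrow> h \<in> Hom C B D \<Longrightarrow> h \<cdot> (f \<oplus> g) = h \<cdot> f \<oplus> h \<cdot> g"
  using additive by (simp add: additive_category_def)
lemma comp_add_distrib_right:
  "f \<in> Hom C A B \<Longrightarrow> g \<in> Hom C A B \<Longrightarrow> k \<in> Hom C E A \<Longrightarrow> (f \<oplus> g) \<cdot> k = f \<cdot> k \<oplus> g \<cdot> k"
  using additive by (simp add: additive_category_def)
lemma zero_object: "\<exists>Z\<in>Ob C. \<forall>A\<in>Ob C. (\<exists>!f. f \<in> Hom C Z A) \<and> (\<exists>!f. f \<in> Hom C A Z)"
  using additive unfolding additive_category_def by (elim conjE) assumption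

lemma hom_src_ob: "f \<in> Hom C A B \<Longrightarrow> A \<in> Ob C"
  using mor_ob hom_mor hom_src by metis
lemma hom_tgt_ob: "f \<in> Hom C A B \<Longrightarrow> B \<in> Ob C"
  using mor_ob hom_mor hom_tgt by metis

context
  fixes A B assumes ob: "A \<in> Ob C" "B \<in> Ob C"
begin

lemma biproduct: "bsum C A B \<in> Ob C \<and>
    bin1 C A B \<in> Hom C A (bsum C A B) \<and> bin2 C A B \<in> Hom C B (bsum C A B) \<and>
    bpr1 C A B \<in> Hom C (bsum C A B) A \<and> bpr2 C A B \<in> Hom C (bsum C A B) B \<and>
    bpr1 C A B \<cdot> bin1 C A B = idm C A \<and> bpr2 C A B \<cdot> bin2 C A B = idm C B \<and>
    bpr1 C A B \<cdot> bin2 C A B = Z B A \<and> bpr2 C A B \<cdot> bin1 C A B = Z A B \<and>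
    bin1 C A B \<cdot> bpr1 C A B \<oplus> bin2 C A B \<cdot> bpr2 C A B = idm C (bsum C A B)"
  using additive ob by (simp add: additive_category_def)

lemma bsum_ob: "bsum C A B \<in> Ob C" using biproduct by blast
lemma bin1_hom: "bin1 C A B \<in> Hom C A (bsum C A B)" using biproduct by blast
lemma bin2_hom: "bin2 C A B \<in> Hom C B (bsum C A B)" using biproduct by blast
lemma bpr1_hom: "bpr1 C A B \<in> Hom C (bsum C A B) A" using biproduct by blast
lemma bpr2_hom: "bpr2 C A B \<in> Hom C (bsum C A B) B" using biproduct by blast
lemma bpr1_bin1: "bpr1 C A B \<cdot> bin1 C A B = idm C A" using biproduct by blast
lemma bpr2_bin2: "bpr2 C A B \<cdot> bin2 C A B = idm C B" using biproduct by blast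
lemma bpr1_bin2: "bpr1 C A B \<cdot> bin2 C A B = Z B A" using biproduct by blast
lemma bpr2_bin1: "bpr2 C A B \<cdot> bin1 C A B = Z A B" using biproduct by blast
lemma bin_bpr_sum: "bin1 C A B \<cdot> bpr1 C A B \<oplus> bin2 C A B \<cdot> bpr2 C A B = idm C (bsum C A B)"
  using biproduct by blast

end

lemma add_zero_left: "f \<in> Hom C A B \<Longrightarrow> Z A B \<oplus> f = f"
  by (metis add_zero add_comm hom_src_ob hom_tgt_ob zero_hom)
lemma add_neg_left: "f \<in> Hom C A B \<Longrightarrow> ng f \<oplus> f = Z A B"
  by (metis add_neg add_comm neg_hom)

lemma add_left_cancel:
  assumes "a \<in> Hom C X Y" "x \<in> Hom C X Y" "y \<in> Hom C X Y" "a \<oplus> x = a \<oplus> y"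
  shows "x = y"
proof -
  have "x = (ng a \<oplus> a) \<oplus> x" using add_neg_left[OF assms(1)] add_zero_left[OF assms(2)] by simp
  also have "\<dots> = ng a \<oplus> (a \<oplus> y)" using add_assoc[OF neg_hom[OF assms(1)] assms(1,2)] assms(4) by simp
  also have "\<dots> = (ng a \<oplus> a) \<oplus> y" using add_assoc[OF neg_hom[OF assms(1)] assms(1,3)] by simp
  also have "\<dots> = y" using add_neg_left[OF assms(1)] add_zero_left[OF assms(3)] by simp
  finally show ?thesis .
qed

lemma add_idempotent_eq_zero: assumes "x \<in> Hom C A B" "x \<oplus> x = x" shows "x = Z A B"
proof -
  have z: "Z A B \<in> Hom C A B" using assms(1) hom_src_ob hom_tgt_ob zero_hom by blast
  have "x \<oplus> x = x \<oplus> Z A B" using assms add_zero by metis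
  then show ?thesis by (rule add_left_cancel[OF assms(1) assms(1) z])
qed

lemma neg_unique: assumes "a \<in> Hom C A B" "b \<in> Hom C A B" "a \<oplus> b = Z A B" shows "b = ng a"
  using add_left_cancel[OF assms(1,2) neg_hom[OF assms(1)]] assms(3) add_neg[OF assms(1)] by simp

lemma neg_neg: "a \<in> Hom C A B \<Longrightarrow> ng (ng a) = a"
  by (metis neg_unique add_neg_left neg_hom)

lemma add_neg_cancel: assumes "x \<in> Hom C X Y" "v \<in> Hom C X Y" shows "x \<oplus> (v \<oplus> ng x) = v"
proof -
  have "x \<oplus> (v \<oplus> ng x) = (v \<oplus> x) \<oplus> ng x"
    using add_assoc[OF assms neg_hom[OF assms(1)]] add_comm[OF assms] by simp
  also have "\<dots> = v" using add_assoc[OF assms(2,1) neg_hom[OF assms(1)]] add_neg[OF assms(1)]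
      add_zero[OF assms(2)] by simp
  finally show ?thesis .
qed

lemma comp_zero_right: assumes "h \<in> Hom C B D" "A \<in> Ob C" shows "h \<cdot> Z A B = Z A D"
proof -
  have z: "Z A B \<in> Hom C A B" using assms hom_src_ob zero_hom by blast
  have "h \<cdot> Z A B \<oplus> h \<cdot> Z A B = h \<cdot> (Z A B \<oplus> Z A B)" using comp_add_distrib_left z assms by metis
  also have "\<dots> = h \<cdot> Z A B" using add_zero z by metis
  finally show ?thesis using add_idempotent_eq_zero comp_hom z assms by metis
qed

lemma comp_zero_left: assumes "h \<in> Hom C A B" "D \<in> Ob C" shows "Z B D \<cdot> h = Z A D"
proof -
  have z: "Z B D \<in> Hom C B D" using assms hom_tgt_ob zero_hom by blast
  have "Z B D \<cdot> h \<oplus> Z B D \<cdot> h = (Z B D \<oplus> Z B D) \<cdot> h" using comp_add_distrib_right z assms by metis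
  also have "\<dots> = Z B D \<cdot> h" using add_zero z by metis
  finally show ?thesis using add_idempotent_eq_zero comp_hom z assms by metis
qed

lemma comp_neg_right: assumes "f \<in> Hom C A B" "h \<in> Hom C B D" shows "h \<cdot> ng f = ng (h \<cdot> f)"
proof -
  have "h \<cdot> f \<oplus> h \<cdot> ng f = h \<cdot> (f \<oplus> ng f)" using assms comp_add_distrib_left neg_hom by metis
  also have "\<dots> = Z A D" using assms add_neg comp_zero_right hom_src_ob by metis
  finally show ?thesis using neg_unique assms comp_hom neg_hom by metis
qed

lemma comp_neg_left: assumes "f \<in> Hom C A B" "k \<in> Hom C E A" shows "ng f \<cdot> k = ng (f \<cdot> k)"
proof -
  have "f \<cdot> k \<oplus> ng f \<cdot> k = (f \<oplus> ng f) \<cdot> k" using assms comp_add_distrib_right neg_hom by metis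
  also have "\<dots> = Z E B" using assms add_neg comp_zero_left hom_tgt_ob by metis
  finally show ?thesis using neg_unique assms comp_hom neg_hom by metis
qed

lemma copair_hom: assumes "u \<in> Hom C B1 X" "v \<in> Hom C B2 X"
  shows "u \<cdot> bpr1 C B1 B2 \<oplus> v \<cdot> bpr2 C B1 B2 \<in> Hom C (bsum C B1 B2) X"
proof -
  have o: "B1 \<in> Ob C" "B2 \<in> Ob C" using assms hom_src_ob by blast+
  show ?thesis by (rule add_hom[OF comp_hom[OF bpr1_hom[OF o] assms(1)] comp_hom[OF bpr2_hom[OF o] assms(2)]])
qed

lemma copair_comp: assumes "u \<in> Hom C B1 X" "v \<in> Hom C B2 X" "g \<in> Hom C Y (bsum C B1 B2)"
  shows "(u \<cdot> bpr1 C B1 B2 \<oplus> v \<cdot> bpr2 C B1 B2) \<cdot> g = u \<cdot> (bpr1 C B1 B2 \<cdot> g) \<oplus> v \<cdot> (bpr2 C B1 B2 \<cdot> g)"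
proof -
  have o: "B1 \<in> Ob C" "B2 \<in> Ob C" using assms hom_src_ob by blast+
  have "(u \<cdot> bpr1 C B1 B2 \<oplus> v \<cdot> bpr2 C B1 B2) \<cdot> g = (u \<cdot> bpr1 C B1 B2) \<cdot> g \<oplus> (v \<cdot> bpr2 C B1 B2) \<cdot> g"
    by (rule comp_add_distrib_right[OF comp_hom[OF bpr1_hom[OF o] assms(1)]
          comp_hom[OF bpr2_hom[OF o] assms(2)] assms(3)])
  also have "\<dots> = u \<cdot> (bpr1 C B1 B2 \<cdot> g) \<oplus> v \<cdot> (bpr2 C B1 B2 \<cdot> g)"
    using comp_assoc[OF assms(3) bpr1_hom[OF o] assms(1)] comp_assoc[OF assms(3) bpr2_hom[OF o] assms(2)]
    by simp
  finally show ?thesis .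
qed

lemma copair_bin1: assumes "u \<in> Hom C B1 X" "v \<in> Hom C B2 X"
  shows "(u \<cdot> bpr1 C B1 B2 \<oplus> v \<cdot> bpr2 C B1 B2) \<cdot> bin1 C B1 B2 = u"
proof -
  have o: "B1 \<in> Ob C" "B2 \<in> Ob C" using assms hom_src_ob by blast+
  show ?thesis
    using copair_comp[OF assms bin1_hom[OF o]] bpr1_bin1[OF o] bpr2_bin1[OF o] id_right[OF assms(1)]
      comp_zero_right[OF assms(2) o(1)] add_zero[OF assms(1)] by simp
qed

lemma copair_bin2: assumes "u \<in> Hom C B1 X" "v \<in> Hom C B2 X"
  shows "(u \<cdot> bpr1 C B1 B2 \<oplus> v \<cdot> bpr2 C B1 B2) \<cdot> bin2 C B1 B2 = v"
proof -
  have o: "B1 \<in> Ob C" "B2 \<in> Ob C" using assms hom_src_ob by blast+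
  show ?thesis
    using copair_comp[OF assms bin2_hom[OF o]] bpr1_bin2[OF o] bpr2_bin2[OF o] id_right[OF assms(2)]
      comp_zero_right[OF assms(1) o(2)] add_zero_left[OF assms(2)] by simp
qed

lemma tuple_hom: assumes "x \<in> Hom C X B1" "y \<in> Hom C X B2"
  shows "bin1 C B1 B2 \<cdot> x \<oplus> bin2 C B1 B2 \<cdot> y \<in> Hom C X (bsum C B1 B2)"
proof -
  have o: "B1 \<in> Ob C" "B2 \<in> Ob C" using assms hom_tgt_ob by blast+
  show ?thesis by (rule add_hom[OF comp_hom[OF assms(1) bin1_hom[OF o]] comp_hom[OF assms(2) bin2_hom[OF o]]])
qed

lemma comp_tuple: assumes "x \<in> Hom C X B1" "y \<in> Hom C X B2" "g \<in> Hom C (bsum C B1 B2) Y"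
  shows "g \<cdot> (bin1 C B1 B2 \<cdot> x \<oplus> bin2 C B1 B2 \<cdot> y) = (g \<cdot> bin1 C B1 B2) \<cdot> x \<oplus> (g \<cdot> bin2 C B1 B2) \<cdot> y"
proof -
  have o: "B1 \<in> Ob C" "B2 \<in> Ob C" using assms hom_tgt_ob by blast+
  have "g \<cdot> (bin1 C B1 B2 \<cdot> x \<oplus> bin2 C B1 B2 \<cdot> y) = g \<cdot> (bin1 C B1 B2 \<cdot> x) \<oplus> g \<cdot> (bin2 C B1 B2 \<cdot> y)"
    by (rule comp_add_distrib_left[OF comp_hom[OF assms(1) bin1_hom[OF o]]
          comp_hom[OF assms(2) bin2_hom[OF o]] assms(3)])
  also have "\<dots> = (g \<cdot> bin1 C B1 B2) \<cdot> x \<oplus> (g \<cdot> bin2 C B1 B2) \<cdot> y"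
    using comp_assoc[OF assms(1) bin1_hom[OF o] assms(3)] comp_assoc[OF assms(2) bin2_hom[OF o] assms(3)]
    by simp
  finally show ?thesis .
qed

lemma bpr1_tuple: assumes "x \<in> Hom C X B1" "y \<in> Hom C X B2"
  shows "bpr1 C B1 B2 \<cdot> (bin1 C B1 B2 \<cdot> x \<oplus> bin2 C B1 B2 \<cdot> y) = x"
proof -
  have o: "B1 \<in> Ob C" "B2 \<in> Ob C" using assms hom_tgt_ob by blast+
  show ?thesis
    using comp_tuple[OF assms bpr1_hom[OF o]] bpr1_bin1[OF o] bpr1_bin2[OF o] id_left[OF assms(1)]
      comp_zero_left[OF assms(2) o(1)] add_zero[OF assms(1)] by simp
qed

lemma bpr2_tuple: assumes "x \<in> Hom C X B1" "y \<in> Hom C X B2"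
  shows "bpr2 C B1 B2 \<cdot> (bin1 C B1 B2 \<cdot> x \<oplus> bin2 C B1 B2 \<cdot> y) = y"
proof -
  have o: "B1 \<in> Ob C" "B2 \<in> Ob C" using assms hom_tgt_ob by blast+
  show ?thesis
    using comp_tuple[OF assms bpr2_hom[OF o]] bpr2_bin1[OF o] bpr2_bin2[OF o] id_left[OF assms(2)]
      comp_zero_left[OF assms(1) o(2)] add_zero_left[OF assms(2)] by simp
qed

lemma bsum_in_ext:
  assumes "w1 \<in> Hom C X (bsum C B1 B2)" "w2 \<in> Hom C X (bsum C B1 B2)"
    "bpr1 C B1 B2 \<cdot> w1 = bpr1 C B1 B2 \<cdot> w2" "bpr2 C B1 B2 \<cdot> w1 = bpr2 C B1 B2 \<cdot> w2"
    and o: "B1 \<in> Ob C" "B2 \<in> Ob C"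
  shows "w1 = w2"
proof -
  have "w = bin1 C B1 B2 \<cdot> (bpr1 C B1 B2 \<cdot> w) \<oplus> bin2 C B1 B2 \<cdot> (bpr2 C B1 B2 \<cdot> w)"
    if w: "w \<in> Hom C X (bsum C B1 B2)" for w
    using id_left[OF w] copair_comp[OF bin1_hom[OF o] bin2_hom[OF o] w] bin_bpr_sum[OF o] by simp
  then show ?thesis using assms(1-4) by metis
qed

lemma kernel_homs: assumes "is_kernel C k d"
  shows "k \<in> Hom C (src C k) (src C d)" "d \<in> Hom C (src C d) (tgt C d)" "d \<cdot> k = Z (src C k) (tgt C d)"
  using assms unfolding is_kernel_def Hom_def by simp_all

lemma kernel_factor:
  assumes "is_kernel C k d" "g \<in> Hom C X (src C d)" "d \<cdot> g = Z X (tgt C d)"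
  obtains h where "h \<in> Hom C X (src C k)" "k \<cdot> h = g"
  using is_kernelD[OF assms(1) hom_src_ob[OF assms(2)] assms(2,3)] by blast

lemma kernel_cancel:
  assumes "is_kernel C k d" "x \<in> Hom C X (src C k)" "y \<in> Hom C X (src C k)" "k \<cdot> x = k \<cdot> y"
  shows "x = y"
proof -
  note kd = kernel_homs[OF assms(1)]
  have "d \<cdot> (k \<cdot> x) = Z X (tgt C d)"
    using comp_assoc[OF assms(2) kd(1,2)] kd(3) comp_zero_left[OF assms(2) hom_tgt_ob[OF kd(2)]] by simp
  then show ?thesis
    by (rule ex1_unique[OF is_kernelD[OF assms(1) hom_src_ob[OF assms(2)] comp_hom[OF assms(2) kd(1)]]])
      (use assms(2-4) in auto)
qed

lemma cokernel_homs: assumes "is_cokernel C d k"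
  shows "k \<in> Hom C (src C k) (src C d)" "d \<in> Hom C (src C d) (tgt C d)"
    "d \<cdot> k = Z (src C k) (tgt C d)" "tgt C k = src C d"
  using assms unfolding is_cokernel_def Hom_def by simp_all

lemma cokernel_factor:
  assumes "is_cokernel C d k" "g \<in> Hom C (src C d) X" "g \<cdot> k = Z (src C k) X"
  obtains h where "h \<in> Hom C (tgt C d) X" "h \<cdot> d = g"
  using ex1_implies_ex[OF is_cokernelD[OF assms(1) hom_tgt_ob[OF assms(2)] _ assms(3)]] assms(2)
    cokernel_homs(4)[OF assms(1)] by auto

lemma cokernel_cancel:
  assumes "is_cokernel C d k" "x \<in> Hom C (tgt C d) X" "y \<in> Hom C (tgt C d) X" "x \<cdot> d = y \<cdot> d"
  shows "x = y"
proof -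
  note kd = cokernel_homs[OF assms(1)]
  have xd: "x \<cdot> d \<in> Hom C (tgt C k) X" using comp_hom[OF kd(2) assms(2)] kd(4) by simp
  have "(x \<cdot> d) \<cdot> k = Z (src C k) X"
    using comp_assoc[OF kd(1,2) assms(2)] kd(3) comp_zero_right[OF assms(2) hom_src_ob[OF kd(1)]] by simp
  then show ?thesis
    by (rule ex1_unique[OF is_cokernelD[OF assms(1) hom_tgt_ob[OF assms(2)] xd]]) (use assms(2-4) in auto)
qed

lemma isoI: assumes "f \<in> Hom C X Y" "g \<in> Hom C Y X" "g \<cdot> f = idm C X" "f \<cdot> g = idm C Y"
  shows "iso C f"
  unfolding iso_def using assms hom_mor[OF assms(1)] hom_src[OF assms(1)] hom_tgt[OF assms(1)] by blast

lemma iso_idm: "X \<in> Ob C \<Longrightarrow> iso C (idm C X)"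
  using isoI[OF id_hom id_hom] id_left[OF id_hom] by metis

lemma iso_inverse: assumes "iso C x" "x \<in> Hom C X Y"
  obtains y where "y \<in> Hom C Y X" "y \<cdot> x = idm C X" "x \<cdot> y = idm C Y"
  using assms unfolding iso_def using hom_src[OF assms(2)] hom_tgt[OF assms(2)] by blast

lemma kernels_iso:
  assumes kd: "is_kernel C k d" and k'd: "is_kernel C k' d"
  obtains b where "b \<in> Hom C (src C k) (src C k')" "iso C b" "k' \<cdot> b = k"
proof -
  note hk = kernel_homs[OF kd] and hk' = kernel_homs[OF k'd]
  obtain a where a: "a \<in> Hom C (src C k') (src C k)" "k \<cdot> a = k'" using kernel_factor[OF kd hk'(1,3)] .
  obtain b where b: "b \<in> Hom C (src C k) (src C k')" "k' \<cdot> b = k" using kernel_factor[OF k'd hk(1,3)] .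
  have "a \<cdot> b = idm C (src C k)"
    by (rule kernel_cancel[OF kd comp_hom[OF b(1) a(1)] id_hom[OF hom_src_ob[OF hk(1)]]])
      (use comp_assoc[OF b(1) a(1) hk(1)] a(2) b(2) id_right[OF hk(1)] in simp)
  moreover have "b \<cdot> a = idm C (src C k')"
    by (rule kernel_cancel[OF k'd comp_hom[OF a(1) b(1)] id_hom[OF hom_src_ob[OF hk'(1)]]])
      (use comp_assoc[OF a(1) b(1) hk'(1)] a(2) b(2) id_right[OF hk'(1)] in simp)
  ultimately show thesis using that b isoI[OF b(1) a(1)] by blast
qed

lemma cokernels_iso:
  assumes dk: "is_cokernel C d k" and d'k: "is_cokernel C d' k"
  obtains c where "c \<in> Hom C (tgt C d) (tgt C d')" "iso C c" "c \<cdot> d = d'"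
proof -
  note hd = cokernel_homs[OF dk] and hd' = cokernel_homs[OF d'k]
  have src: "src C d' = src C d" using hd(4) hd'(4) by simp
  obtain c where c: "c \<in> Hom C (tgt C d) (tgt C d')" "c \<cdot> d = d'"
    using cokernel_factor[OF dk _ hd'(3)] hd'(2) src by metis
  obtain e where e: "e \<in> Hom C (tgt C d') (tgt C d)" "e \<cdot> d' = d"
    using cokernel_factor[OF d'k _ hd(3)] hd(2) src by metis
  have "e \<cdot> c = idm C (tgt C d)"
    by (rule cokernel_cancel[OF dk comp_hom[OF c(1) e(1)] id_hom[OF hom_tgt_ob[OF hd(2)]]])
      (use comp_assoc[OF hd(2) c(1) e(1)] c(2) e(2) id_left[OF hd(2)] in simp)
  moreover have "c \<cdot> e = idm C (tgt C d')"
    by (rule cokernel_cancel[OF d'k comp_hom[OF e(1) c(1)] id_hom[OF hom_tgt_ob[OF hd'(2)]]])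
      (use comp_assoc[OF hd'(2) e(1) c(1)] c(2) e(2) id_left[OF hd'(2)] in simp)
  ultimately show thesis using that c isoI[OF c(1) e(1)] by blast
qed

lemma cokernel_of_factor:
  assumes dk: "is_cokernel C d k" and k': "k' \<in> Hom C K' (src C d)" and dk': "d \<cdot> k' = Z K' (tgt C d)"
    and b: "b \<in> Hom C (src C k) K'" and kb: "k' \<cdot> b = k"
  shows "is_cokernel C d k'"
proof (rule cokernelI[OF k' cokernel_homs(2)[OF dk] dk'])
  fix X g assume g: "X \<in> Ob C" "g \<in> Hom C (src C d) X" "g \<cdot> k' = Z K' X"
  have "g \<cdot> k = Z (src C k) X" using comp_assoc[OF b k' g(2)] kb g(3) comp_zero_left[OF b g(1)] by simp
  then obtain h where "h \<in> Hom C (tgt C d) X" "h \<cdot> d = g" by (rule cokernel_factor[OF dk g(2)])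
  then show "\<exists>h\<in>Hom C (tgt C d) X. h \<cdot> d = g" by blast
qed (use cokernel_cancel[OF dk] in blast)

lemma kernel_of_factor:
  assumes kd: "is_kernel C k d" and d': "d' \<in> Hom C (tgt C k) D'" and dk': "d' \<cdot> k = Z (src C k) D'"
    and e: "e \<in> Hom C D' (tgt C d)" and ed: "e \<cdot> d' = d"
  shows "is_kernel C k d'"
proof -
  have tk: "tgt C k = src C d" using kd unfolding is_kernel_def by simp
  have d'': "d' \<in> Hom C (src C d) D'" using d' tk by simp
  show ?thesis
  proof (rule kernelI[OF kernel_homs(1)[OF kd] d'' dk'])
    fix X g assume g: "X \<in> Ob C" "g \<in> Hom C X (src C d)" "d' \<cdot> g = Z X D'"
    have "d \<cdot> g = Z X (tgt C d)"
      using comp_assoc[OF g(2) d'' e] ed g(3) comp_zero_right[OF e g(1)] by simp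
    then obtain h where "h \<in> Hom C X (src C k)" "k \<cdot> h = g" by (rule kernel_factor[OF kd g(2)])
    then show "\<exists>h\<in>Hom C X (src C k). k \<cdot> h = g" by blast
  qed (use kernel_cancel[OF kd] in blast)
qed

lemma commuting_square_inverse:
  assumes x: "x \<in> Hom C P Q" and y: "y \<in> Hom C R S" and u: "u \<in> Hom C P R"
    and v: "v \<in> Hom C Q S" and u': "u' \<in> Hom C R P" and uu: "u \<cdot> u' = idm C R"
    and v': "v' \<in> Hom C S Q" and vv: "v' \<cdot> v = idm C Q" and c: "y \<cdot> u = v \<cdot> x"
  shows "v' \<cdot> y = x \<cdot> u'"
proof -
  have "v' \<cdot> y = (v' \<cdot> y) \<cdot> (u \<cdot> u')" using uu id_right[OF comp_hom[OF y v']] by simp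
  also have "\<dots> = v' \<cdot> (y \<cdot> u) \<cdot> u'"
    using comp_assoc[OF u' u comp_hom[OF y v']] comp_assoc[OF u y v'] by simp
  also have "\<dots> = (v' \<cdot> v) \<cdot> x \<cdot> u'" using c comp_assoc[OF x v v'] by simp
  also have "\<dots> = x \<cdot> u'" using vv id_left[OF x] by simp
  finally show ?thesis .
qed

end

section \<open>Weakly exact structures\<close>

locale weakly_exact_structure = additive +
  fixes W assumes weakly_exact: "weakly_exact C W"
begin

lemma W_kc_pair: "(k, d) \<in> W \<Longrightarrow> kc_pair C k d"
  using weakly_exact unfolding weakly_exact_def by (elim conjE) (drule (1) bspec, simp)

lemma W_kernel: "(k, d) \<in> W \<Longrightarrow> is_kernel C k d"
  using W_kc_pair unfolding kc_pair_def by simp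

lemma W_cokernel: "(k, d) \<in> W \<Longrightarrow> is_cokernel C d k"
  using W_kc_pair unfolding kc_pair_def by simp

lemma W_iso_closed:
  assumes "(k, d) \<in> W" "kc_pair C k' d'" "iso C a" "iso C b" "iso C c"
    "a \<in> Hom C (src C k) (src C k')" "b \<in> Hom C (tgt C k) (tgt C k')" "c \<in> Hom C (tgt C d) (tgt C d')"
    "b \<cdot> k = k' \<cdot> a" "c \<cdot> d = d' \<cdot> b"
  shows "(k', d') \<in> W"
proof -
  have "\<forall>(i, d) \<in> W. \<forall>i' d' a b c. kc_pair C i' d' \<and> iso C a \<and> iso C b \<and> iso C c \<and>
        a \<in> Hom C (src C i) (src C i') \<and> b \<in> Hom C (tgt C i) (tgt C i') \<and>
        c \<in> Hom C (tgt C d) (tgt C d') \<and> b \<cdot> i = i' \<cdot> a \<and> c \<cdot> d = d' \<cdot> b \<longrightarrow> (i', d') \<in> W"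
    using weakly_exact unfolding weakly_exact_def by (elim conjE) assumption
  note closed = bspec[OF this assms(1), unfolded case_prod_conv, rule_format]
  show ?thesis by (rule closed[of k' d' a b c]) (use assms in simp)
qed

lemma pullback_adm_epic:
  assumes "adm_epic C W h" "t \<in> Mor C" "tgt C t = tgt C h" "is_pullback C h t q p"
  shows "adm_epic C W p"
proof -
  have "\<forall>h t. adm_epic C W h \<and> t \<in> Mor C \<and> tgt C t = tgt C h \<longrightarrow>
      (\<exists>q p. is_pullback C h t q p) \<and> (\<forall>q p. is_pullback C h t q p \<longrightarrow> adm_epic C W p)"
    using weakly_exact unfolding weakly_exact_def by (elim conjE) assumption
  then have "\<forall>q p. is_pullback C h t q p \<longrightarrow> adm_epic C W p" using assms(1-3) by simp
  then show ?thesis using assms(4) by simp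
qed

lemma W_replace_kernel: assumes kd: "(k, d) \<in> W" and k'd: "is_kernel C k' d" shows "(k', d) \<in> W"
proof -
  note hk = kernel_homs[OF W_kernel[OF kd]] and hk' = kernel_homs[OF k'd]
  obtain b where b: "b \<in> Hom C (src C k) (src C k')" "iso C b" "k' \<cdot> b = k"
    using kernels_iso[OF W_kernel[OF kd] k'd] .
  have "is_cokernel C d k'" by (rule cokernel_of_factor[OF W_cokernel[OF kd] hk'(1,3) b(1,3)])
  then have kc: "kc_pair C k' d" unfolding kc_pair_def using k'd by blast
  have ob: "src C d \<in> Ob C" "tgt C d \<in> Ob C" using hk(2) hom_src_ob hom_tgt_ob by blast+
  have tgt: "tgt C k = src C d" "tgt C k' = src C d" using hk(1) hk'(1) hom_tgt by blast+
  show ?thesis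
    by (rule W_iso_closed[OF kd kc b(2) iso_idm[OF ob(1)] iso_idm[OF ob(2)] b(1)])
      (use tgt id_hom[OF ob(1)] id_hom[OF ob(2)] id_left[OF hk(1)] id_left[OF hk(2)] id_right[OF hk(2)]
        b(3) in simp_all)
qed

lemma W_replace_cokernel: assumes kd: "(k, d) \<in> W" and d'k: "is_cokernel C d' k" shows "(k, d') \<in> W"
proof -
  note hd = cokernel_homs[OF W_cokernel[OF kd]] and hd' = cokernel_homs[OF d'k]
  obtain c where c: "c \<in> Hom C (tgt C d) (tgt C d')" "iso C c" "c \<cdot> d = d'"
    using cokernels_iso[OF W_cokernel[OF kd] d'k] .
  obtain e where e: "e \<in> Hom C (tgt C d') (tgt C d)" "e \<cdot> d' = d"
    using cokernels_iso[OF d'k W_cokernel[OF kd]] by blast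
  have "is_kernel C k d'"
    by (rule kernel_of_factor[OF W_kernel[OF kd] _ _ e]) (use hd(4) hd'(2,3,4) in simp_all)
  then have kc: "kc_pair C k d'" unfolding kc_pair_def using d'k by blast
  have ob: "src C k \<in> Ob C" "src C d \<in> Ob C" using hd(1) hom_src_ob hom_tgt_ob by blast+
  show ?thesis
    by (rule W_iso_closed[OF kd kc iso_idm[OF ob(1)] iso_idm[OF ob(2)] c(2) _ _ c(1)])
      (use hd(4) id_hom[OF ob(1)] id_hom[OF ob(2)] id_left[OF hd(1)] id_right[OF hd(1)]
        id_right[OF hd(2)] hd'(4) c(3) id_right[OF hd'(2)] in simp_all)
qed

end

section \<open>A commutative square and its biproduct sequence\<close>

locale commutative_square = additive +
  fixes A B A' B' i f f' i'
  assumes i: "i \<in> Hom C A B" and f: "f \<in> Hom C A A'" and f': "f' \<in> Hom C B B'"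
    and i': "i' \<in> Hom C A' B'" and commutes: "f' \<cdot> i = i' \<cdot> f"
begin

abbreviation "S \<equiv> bsum C B A'"
abbreviation "q1 \<equiv> bpr1 C B A'"
abbreviation "q2 \<equiv> bpr2 C B A'"
abbreviation "mu \<equiv> bin1 C B A' \<cdot> i \<oplus> bin2 C B A' \<cdot> ng f"
abbreviation "eps \<equiv> f' \<cdot> q1 \<oplus> i' \<cdot> q2"

lemma obs: "A \<in> Ob C" "B \<in> Ob C" "A' \<in> Ob C" "B' \<in> Ob C"
  using i f' i' hom_src_ob hom_tgt_ob by blast+

lemma q1_hom: "q1 \<in> Hom C S B" using bpr1_hom obs by blast
lemma q2_hom: "q2 \<in> Hom C S A'" using bpr2_hom obs by blast
lemma mu_hom: "mu \<in> Hom C A S" by (rule tuple_hom[OF i neg_hom[OF f]])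
lemma eps_hom: "eps \<in> Hom C S B'" by (rule copair_hom[OF f' i'])

lemma eps_comp: "g \<in> Hom C X S \<Longrightarrow> eps \<cdot> g = f' \<cdot> (q1 \<cdot> g) \<oplus> i' \<cdot> (q2 \<cdot> g)"
  by (rule copair_comp[OF f' i'])

lemma mu_comp: assumes "h \<in> Hom C X A"
  shows "q1 \<cdot> (mu \<cdot> h) = i \<cdot> h" "q2 \<cdot> (mu \<cdot> h) = ng (f \<cdot> h)"
  using comp_assoc[OF assms mu_hom q1_hom] comp_assoc[OF assms mu_hom q2_hom] bpr1_tuple[OF i neg_hom[OF f]]
    bpr2_tuple[OF i neg_hom[OF f]] comp_neg_left[OF f assms] by simp_all

lemma eps_mu: "eps \<cdot> mu = Z A B'"
  using eps_comp[OF mu_hom] bpr1_tuple[OF i neg_hom[OF f]] bpr2_tuple[OF i neg_hom[OF f]] commutes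
    comp_neg_right[OF f i'] add_neg[OF comp_hom[OF f i']] by simp

lemma cokernel_imp_pushout: assumes "is_cokernel C eps mu" shows "is_pushout C i f f' i'"
proof (rule pushoutI[OF i f f' i' commutes])
  have src: "src C eps = S" "tgt C eps = B'" "src C mu = A" using eps_hom mu_hom hom_src hom_tgt by blast+
  fix X u v assume uv: "X \<in> Ob C" "u \<in> Hom C B X" "v \<in> Hom C A' X" "u \<cdot> i = v \<cdot> f"
  let ?g = "u \<cdot> q1 \<oplus> v \<cdot> q2"
  have "?g \<cdot> mu = Z (src C mu) X"
    using copair_comp[OF uv(2,3) mu_hom] bpr1_tuple[OF i neg_hom[OF f]] bpr2_tuple[OF i neg_hom[OF f]]
      uv(4) comp_neg_right[OF f uv(3)] add_neg[OF comp_hom[OF f uv(3)]] src by simp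
  then obtain h where h: "h \<in> Hom C B' X" "h \<cdot> eps = ?g"
    using cokernel_factor[OF assms] copair_hom[OF uv(2,3)] src by metis
  have "h \<cdot> f' = u" "h \<cdot> i' = v"
    using comp_assoc[OF bin1_hom[OF obs(2,3)] eps_hom h(1)] comp_assoc[OF bin2_hom[OF obs(2,3)] eps_hom h(1)]
      copair_bin1[OF f' i'] copair_bin2[OF f' i'] h(2) copair_bin1[OF uv(2,3)] copair_bin2[OF uv(2,3)]
    by simp_all
  then show "\<exists>w\<in>Hom C B' X. w \<cdot> f' = u \<and> w \<cdot> i' = v" using h(1) by blast
next
  fix X w1 w2 assume w: "w1 \<in> Hom C B' X" "w2 \<in> Hom C B' X" "w1 \<cdot> f' = w2 \<cdot> f'" "w1 \<cdot> i' = w2 \<cdot> i'"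
  have "w1 \<cdot> eps = w2 \<cdot> eps"
    using comp_add_distrib_left[OF comp_hom[OF q1_hom f'] comp_hom[OF q2_hom i'] w(1)]
      comp_add_distrib_left[OF comp_hom[OF q1_hom f'] comp_hom[OF q2_hom i'] w(2)]
      comp_assoc[OF q1_hom f' w(1)] comp_assoc[OF q2_hom i' w(1)]
      comp_assoc[OF q1_hom f' w(2)] comp_assoc[OF q2_hom i' w(2)] w(3,4) by simp
  then show "w1 = w2" using cokernel_cancel[OF assms] w(1,2) eps_hom hom_tgt by metis
qed

lemma kernel_imp_pullback: assumes "is_kernel C mu eps" shows "is_pullback C f' i' i f"
proof (rule pullbackI[OF f' i' i f commutes])
  have src: "src C eps = S" "tgt C eps = B'" "src C mu = A" using eps_hom mu_hom hom_src hom_tgt by blast+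
  fix X u v assume uv: "X \<in> Ob C" "u \<in> Hom C X B" "v \<in> Hom C X A'" "f' \<cdot> u = i' \<cdot> v"
  let ?g = "bin1 C B A' \<cdot> u \<oplus> bin2 C B A' \<cdot> ng v"
  have nv: "ng v \<in> Hom C X A'" by (rule neg_hom[OF uv(3)])
  have "eps \<cdot> ?g = Z X (tgt C eps)"
    using eps_comp[OF tuple_hom[OF uv(2) nv]] bpr1_tuple[OF uv(2) nv] bpr2_tuple[OF uv(2) nv] uv(4)
      comp_neg_right[OF uv(3) i'] add_neg[OF comp_hom[OF uv(3) i']] src by simp
  then obtain h where h: "h \<in> Hom C X A" "mu \<cdot> h = ?g"
    using kernel_factor[OF assms] tuple_hom[OF uv(2) nv] src by metis
  have "i \<cdot> h = u" "ng (f \<cdot> h) = ng v"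
    using mu_comp[OF h(1)] h(2) bpr1_tuple[OF uv(2) nv] bpr2_tuple[OF uv(2) nv] by simp_all
  then have "i \<cdot> h = u" "f \<cdot> h = v" using neg_neg[OF comp_hom[OF h(1) f]] neg_neg[OF uv(3)] by metis+
  then show "\<exists>w\<in>Hom C X A. i \<cdot> w = u \<and> f \<cdot> w = v" using h(1) by blast
next
  fix X w1 w2 assume w: "w1 \<in> Hom C X A" "w2 \<in> Hom C X A" "i \<cdot> w1 = i \<cdot> w2" "f \<cdot> w1 = f \<cdot> w2"
  have "mu \<cdot> w1 = mu \<cdot> w2"
    by (rule bsum_in_ext[OF comp_hom[OF w(1) mu_hom] comp_hom[OF w(2) mu_hom] _ _ obs(2,3)])
      (use mu_comp[OF w(1)] mu_comp[OF w(2)] w(3,4) in simp_all)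
  then show "w1 = w2" using kernel_cancel[OF assms] w(1,2) mu_hom hom_src by metis
qed

lemma pushout_ext:
  assumes po: "is_pushout C i f f' i'" and w: "w1 \<in> Hom C B' X" "w2 \<in> Hom C B' X"
    "w1 \<cdot> f' = w2 \<cdot> f'" "w1 \<cdot> i' = w2 \<cdot> i'"
  shows "w1 = w2"
proof -
  have X: "X \<in> Ob C" using w(1) hom_tgt_ob by blast
  have tgt: "tgt C i = B" "tgt C f = A'" "tgt C f' = B'" using i f f' hom_tgt by blast+
  have c: "(w1 \<cdot> f') \<cdot> i = (w1 \<cdot> i') \<cdot> f"
    using comp_assoc[OF i f' w(1)] commutes comp_assoc[OF f i' w(1)] by simp
  show ?thesis
    by (rule ex1_unique[OF is_pushoutD[OF po X _ _ c]])
      (use w comp_hom[OF f' w(1)] comp_hom[OF i' w(1)] tgt in auto)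
qed

text \<open>The universal property of the pushout turns the cokernel property of \<open>q\<close> for \<open>i'\<close> into
that of \<open>q f'\<close> for \<open>i\<close>: a map out of \<open>B\<close> killing \<open>i\<close> extends, together with \<open>0 : A' \<rightarrow> X\<close>,
to a map out of \<open>B'\<close> killing \<open>i'\<close>.\<close>

lemma pushout_cokernel_comp:
  assumes po: "is_pushout C i f f' i'" and q: "is_cokernel C q i'"
  shows "is_cokernel C (q \<cdot> f') i"
proof -
  note hq = cokernel_homs[OF q]
  have tgt: "tgt C i = B" "tgt C f = A'" "tgt C f' = B'" using i f f' hom_tgt by blast+
  have q': "q \<in> Hom C B' (tgt C q)" using hq(2,4) hom_tgt[OF i'] by simp
  have qi: "q \<cdot> i' = Z A' (tgt C q)" using hq(3) hom_src[OF i'] by simp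
  show ?thesis
  proof (rule cokernelI[OF i comp_hom[OF f' q']])
    show "(q \<cdot> f') \<cdot> i = Z A (tgt C q)"
      using comp_assoc[OF i f' q'] commutes comp_assoc[OF f i' q'] qi comp_zero_left[OF f hom_tgt_ob[OF q']]
      by simp
    fix X g assume g: "X \<in> Ob C" "g \<in> Hom C B X" "g \<cdot> i = Z A X"
    have "g \<cdot> i = Z A' X \<cdot> f" using g(3) comp_zero_left[OF f g(1)] by simp
    then obtain w where w: "w \<in> Hom C B' X" "w \<cdot> f' = g" "w \<cdot> i' = Z A' X"
      using ex1_implies_ex[OF is_pushoutD[OF po g(1)]] g(2) zero_hom[OF obs(3) g(1)] tgt by auto
    then obtain h where h: "h \<in> Hom C (tgt C q) X" "h \<cdot> q = w"
      using cokernel_factor[OF q] hq(4) hom_src[OF i'] hom_tgt[OF i'] by metis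
    then show "\<exists>h\<in>Hom C (tgt C q) X. h \<cdot> (q \<cdot> f') = g" using comp_assoc[OF f' q' h(1)] w(2) by auto
  next
    fix X h1 h2 assume h: "h1 \<in> Hom C (tgt C q) X" "h2 \<in> Hom C (tgt C q) X" "h1 \<cdot> (q \<cdot> f') = h2 \<cdot> (q \<cdot> f')"
    have "h1 \<cdot> q = h2 \<cdot> q"
      by (rule pushout_ext[OF po comp_hom[OF q' h(1)] comp_hom[OF q' h(2)]])
        (use comp_assoc[OF f' q' h(1)] comp_assoc[OF f' q' h(2)] h(3) comp_assoc[OF i' q' h(1)]
          comp_assoc[OF i' q' h(2)] qi comp_zero_right[OF h(1) obs(3)] comp_zero_right[OF h(2) obs(3)] in simp_all)
    then show "h1 = h2" using cokernel_cancel[OF q] h(1,2) by blast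
  qed
qed

context
  fixes E p p' assumes p': "p' \<in> Hom C B' E" and p'f': "p' \<cdot> f' = p" and i'p': "is_kernel C i' p'"
begin

lemma p_hom: "p \<in> Hom C B E" using comp_hom[OF f' p'] p'f' by simp

lemma p'_i': "p' \<cdot> i' = Z A' E"
  using kernel_homs(3)[OF i'p'] hom_src[OF i'] hom_tgt[OF p'] by simp

lemma p'_eps: "p' \<cdot> eps = p \<cdot> q1"
  using comp_add_distrib_left[OF comp_hom[OF q1_hom f'] comp_hom[OF q2_hom i'] p']
    comp_assoc[OF q1_hom f' p'] comp_assoc[OF q2_hom i' p'] p'f' p'_i'
    comp_zero_left[OF q2_hom hom_tgt_ob[OF p']] add_zero[OF comp_hom[OF q1_hom p_hom]] by simp

lemma eps_pullback: "is_pullback C p p' q1 eps"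
proof (rule pullbackI[OF p_hom p' q1_hom eps_hom p'_eps[symmetric]])
  fix X u v assume uv: "X \<in> Ob C" "u \<in> Hom C X B" "v \<in> Hom C X B'" "p \<cdot> u = p' \<cdot> v"
  have fu: "f' \<cdot> u \<in> Hom C X B'" by (rule comp_hom[OF uv(2) f'])
  let ?z = "v \<oplus> ng (f' \<cdot> u)"
  have "p' \<cdot> ?z = Z X (tgt C p')"
    using comp_add_distrib_left[OF uv(3) neg_hom[OF fu] p'] comp_neg_right[OF fu p'] comp_assoc[OF uv(2) f' p']
      p'f' uv(4) add_neg[OF comp_hom[OF uv(3) p']] hom_tgt[OF p'] by simp
  then obtain a where a: "a \<in> Hom C X A'" "i' \<cdot> a = ?z"
    using kernel_factor[OF i'p'] add_hom[OF uv(3) neg_hom[OF fu]] hom_src[OF i'] hom_src[OF p'] by metis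
  let ?w = "bin1 C B A' \<cdot> u \<oplus> bin2 C B A' \<cdot> a"
  have "q1 \<cdot> ?w = u" "eps \<cdot> ?w = v"
    using bpr1_tuple[OF uv(2) a(1)] eps_comp[OF tuple_hom[OF uv(2) a(1)]] bpr2_tuple[OF uv(2) a(1)] a(2)
      add_neg_cancel[OF fu uv(3)] by simp_all
  then show "\<exists>w\<in>Hom C X S. q1 \<cdot> w = u \<and> eps \<cdot> w = v" using tuple_hom[OF uv(2) a(1)] by blast
next
  fix X w1 w2 assume w: "w1 \<in> Hom C X S" "w2 \<in> Hom C X S" "q1 \<cdot> w1 = q1 \<cdot> w2" "eps \<cdot> w1 = eps \<cdot> w2"
  have h: "q1 \<cdot> w1 \<in> Hom C X B" "q2 \<cdot> w1 \<in> Hom C X A'" "q2 \<cdot> w2 \<in> Hom C X A'"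
    using comp_hom q1_hom q2_hom w by blast+
  have "f' \<cdot> (q1 \<cdot> w1) \<oplus> i' \<cdot> (q2 \<cdot> w1) = f' \<cdot> (q1 \<cdot> w1) \<oplus> i' \<cdot> (q2 \<cdot> w2)"
    using eps_comp[OF w(1)] eps_comp[OF w(2)] w(3,4) by simp
  then have "i' \<cdot> (q2 \<cdot> w1) = i' \<cdot> (q2 \<cdot> w2)"
    using add_left_cancel[OF comp_hom[OF h(1) f'] comp_hom[OF h(2) i'] comp_hom[OF h(3) i']] by simp
  then have "q2 \<cdot> w1 = q2 \<cdot> w2" using kernel_cancel[OF i'p'] h(2,3) hom_src[OF i'] by metis
  then show "w1 = w2" by (rule bsum_in_ext[OF w(1,2,3) _ obs(2,3)])
qed

lemma mu_kernel_eps: assumes ip: "is_kernel C i p" shows "is_kernel C mu eps"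
proof (rule kernelI[OF mu_hom eps_hom eps_mu])
  fix X g assume g: "X \<in> Ob C" "g \<in> Hom C X S" "eps \<cdot> g = Z X B'"
  have x: "q1 \<cdot> g \<in> Hom C X B" and y: "q2 \<cdot> g \<in> Hom C X A'" using comp_hom q1_hom q2_hom g(2) by blast+
  have "p \<cdot> (q1 \<cdot> g) = Z X (tgt C p)"
    using comp_assoc[OF g(2) q1_hom p_hom] p'_eps comp_assoc[OF g(2) eps_hom p'] g(3)
      comp_zero_right[OF p' g(1)] hom_tgt[OF p_hom] by simp
  then obtain h where h: "h \<in> Hom C X A" "i \<cdot> h = q1 \<cdot> g"
    using kernel_factor[OF ip] x hom_src[OF p_hom] hom_src[OF i] by metis
  have fh: "f \<cdot> h \<in> Hom C X A'" by (rule comp_hom[OF h(1) f])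
  have "i' \<cdot> (f \<cdot> h \<oplus> q2 \<cdot> g) = i' \<cdot> Z X A'"
    using comp_add_distrib_left[OF fh y i'] comp_assoc[OF h(1) f i'] comp_assoc[OF h(1) i f'] commutes h(2)
      eps_comp[OF g(2)] g(3) comp_zero_right[OF i' g(1)] by simp
  then have "f \<cdot> h \<oplus> q2 \<cdot> g = Z X A'"
    using kernel_cancel[OF i'p'] add_hom[OF fh y] zero_hom[OF g(1) obs(3)] hom_src[OF i'] by metis
  then have "q2 \<cdot> g = ng (f \<cdot> h)" by (rule neg_unique[OF fh y])
  then have "mu \<cdot> h = g"
    by (intro bsum_in_ext[OF comp_hom[OF h(1) mu_hom] g(2) _ _ obs(2,3)]) (use mu_comp[OF h(1)] h(2) in simp_all)
  then show "\<exists>h\<in>Hom C X A. mu \<cdot> h = g" using h(1) by blast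
next
  fix X h1 h2 assume h: "h1 \<in> Hom C X A" "h2 \<in> Hom C X A" "mu \<cdot> h1 = mu \<cdot> h2"
  have "i \<cdot> h1 = i \<cdot> h2" using mu_comp(1)[OF h(1)] mu_comp(1)[OF h(2)] h(3) by metis
  then show "h1 = h2" using kernel_cancel[OF ip] h(1,2) hom_src[OF i] by metis
qed

end

end

locale weakly_exact_square = commutative_square + weakly_exact_structure
begin

lemma cokernel_rows_imp_W:
  assumes ip: "(i, p) \<in> W" and i'p': "(i', p') \<in> W" and p': "p' \<in> Hom C B' E" and p'f': "p' \<cdot> f' = p"
  shows "(mu, eps) \<in> W"
proof -
  have ker': "is_kernel C i' p'" by (rule W_kernel[OF i'p'])
  have p: "p \<in> Hom C B E" by (rule p_hom[OF p' p'f' ker'])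
  have "adm_epic C W eps"
    by (rule pullback_adm_epic[OF _ hom_mor[OF p'] _ eps_pullback[OF p' p'f' ker']])
      (use ip hom_tgt[OF p] hom_tgt[OF p'] in \<open>auto simp: adm_epic_def\<close>)
  then obtain k where "(k, eps) \<in> W" unfolding adm_epic_def by blast
  then show ?thesis by (rule W_replace_kernel[OF _ mu_kernel_eps[OF p' p'f' ker' W_kernel[OF ip]]])
qed

lemma pushout_imp_cokernel_rows:
  assumes po: "is_pushout C i f f' i'" and "adm_monic C W i" "adm_monic C W i'"
  shows "\<exists>E p p'. p \<in> Hom C B E \<and> p' \<in> Hom C B' E \<and> (i, p) \<in> W \<and> (i', p') \<in> W \<and> p' \<cdot> f' = idm C E \<cdot> p"
proof -
  obtain p0 where ip0: "(i, p0) \<in> W" using assms(2) unfolding adm_monic_def by blast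
  obtain q where i'q: "(i', q) \<in> W" using assms(3) unfolding adm_monic_def by blast
  have q: "q \<in> Hom C B' (tgt C q)" using cokernel_homs(2,4)[OF W_cokernel[OF i'q]] hom_tgt[OF i'] by simp
  have "(i, q \<cdot> f') \<in> W" by (rule W_replace_cokernel[OF ip0 pushout_cokernel_comp[OF po W_cokernel[OF i'q]]])
  then show ?thesis using i'q q comp_hom[OF f' q] id_left[OF comp_hom[OF f' q]] by metis
qed

lemma pushout_square_equivalences:
  assumes "adm_monic C W i" "adm_monic C W i'"
  shows "(is_pushout C i f f' i' \<longleftrightarrow> (mu, eps) \<in> W) \<and>
    (is_pushout C i f f' i' \<longleftrightarrow> is_pushout C i f f' i' \<and> is_pullback C f' i' i f) \<and>
    (is_pushout C i f f' i' \<longleftrightarrow>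
      (\<exists>E p p'. p \<in> Hom C B E \<and> p' \<in> Hom C B' E \<and> (i, p) \<in> W \<and> (i', p') \<in> W \<and> p' \<cdot> f' = idm C E \<cdot> p))"
proof -
  have "is_pushout C i f f' i' \<and> is_pullback C f' i' i f" if "(mu, eps) \<in> W"
    using cokernel_imp_pushout[OF W_cokernel[OF that]] kernel_imp_pullback[OF W_kernel[OF that]] by blast
  moreover have "(mu, eps) \<in> W"
    if "\<exists>E p p'. p \<in> Hom C B E \<and> p' \<in> Hom C B' E \<and> (i, p) \<in> W \<and> (i', p') \<in> W \<and> p' \<cdot> f' = idm C E \<cdot> p"
    using that cokernel_rows_imp_W id_left by metis
  ultimately show ?thesis using pushout_imp_cokernel_rows[OF _ assms] by blast
qed

end

section \<open>Duality\<close>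

definition opposite :: "('o, 'm) addcat \<Rightarrow> ('o, 'm) addcat" where
  "opposite C = \<lparr>Ob = Ob C, Mor = Mor C, src = tgt C, tgt = src C, cmp = (\<lambda>g f. cmp C f g),
     idm = idm C, madd = madd C, mneg = mneg C, zer = (\<lambda>A B. zer C B A), bsum = bsum C,
     bin1 = bpr1 C, bin2 = bpr2 C, bpr1 = bin1 C, bpr2 = bin2 C\<rparr>"

lemma opposite_simps [simp]:
  "Ob (opposite C) = Ob C" "Mor (opposite C) = Mor C" "src (opposite C) = tgt C"
  "tgt (opposite C) = src C" "cmp (opposite C) g f = cmp C f g" "idm (opposite C) = idm C"
  "madd (opposite C) = madd C" "mneg (opposite C) = mneg C" "zer (opposite C) A B = zer C B A"
  "bsum (opposite C) = bsum C" "bin1 (opposite C) = bpr1 C" "bin2 (opposite C) = bpr2 C"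
  "bpr1 (opposite C) = bin1 C" "bpr2 (opposite C) = bin2 C"
  by (simp_all add: opposite_def)

lemma Hom_opposite [simp]: "Hom (opposite C) A B = Hom C B A"
  unfolding Hom_def by auto

lemma is_kernel_opposite [simp]: "is_kernel (opposite C) k d = is_cokernel C k d"
  unfolding is_kernel_def is_cokernel_def by (simp add: eq_commute[of "tgt C d" "src C k"] conj_ac)

lemma is_cokernel_opposite [simp]: "is_cokernel (opposite C) d k = is_kernel C d k"
  unfolding is_kernel_def is_cokernel_def by (simp add: eq_commute[of "tgt C d" "src C k"] conj_ac)

lemma kc_pair_opposite [simp]: "kc_pair (opposite C) k d = kc_pair C d k"
  unfolding kc_pair_def by auto

lemma is_pushout_opposite [simp]: "is_pushout (opposite C) = is_pullback C"
  unfolding is_pushout_def is_pullback_def by (intro ext) simp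

lemma is_pullback_opposite [simp]: "is_pullback (opposite C) = is_pushout C"
  unfolding is_pushout_def is_pullback_def by (intro ext) simp

lemma iso_opposite [simp]: "iso (opposite C) f = iso C f"
  unfolding iso_def by auto

lemma adm_monic_opposite [simp]: "adm_monic (opposite C) {(d, i). (i, d) \<in> W} x = adm_epic C W x"
  unfolding adm_monic_def adm_epic_def by simp

lemma adm_epic_opposite [simp]: "adm_epic (opposite C) {(d, i). (i, d) \<in> W} x = adm_monic C W x"
  unfolding adm_monic_def adm_epic_def by simp

lemma additive_opposite: assumes "additive_category C" shows "additive_category (opposite C)"
proof -
  interpret additive C by (rule additive.intro[OF assms])
  have zero: "\<exists>Z\<in>Ob C. \<forall>A\<in>Ob C. (\<exists>!f. f \<in> Hom C A Z) \<and> (\<exists>!f. f \<in> Hom C Z A)"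
    by (subst conj_commute) (rule zero_object)
  show ?thesis
    unfolding additive_category_def opposite_simps Hom_opposite
    apply (intro conjI)
    subgoal using mor_ob by blast
    subgoal using id_hom by blast
    subgoal using comp_hom by blast
    subgoal using comp_assoc by metis
    subgoal using id_left id_right by blast
    subgoal using zero_hom by blast
    subgoal using add_hom add_comm by blast
    subgoal using add_assoc by blast
    subgoal using neg_hom add_zero add_neg by blast
    subgoal using comp_add_distrib_right by blast
    subgoal using comp_add_distrib_left by blast
    subgoal by (rule zero)
    subgoal using bsum_ob bin1_hom bin2_hom bpr1_hom bpr2_hom bpr1_bin1 bpr2_bin2 bpr1_bin2 bpr2_bin1
        bin_bpr_sum by simp
    done
qed

lemma msum_opposite:
  assumes "additive_category C" "f \<in> Mor C" "g \<in> Mor C"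
  shows "msum (opposite C) f g = msum C f g"
proof -
  interpret additive C by (rule additive.intro[OF assms(1)])
  have ob: "src C f \<in> Ob C" "tgt C f \<in> Ob C" "src C g \<in> Ob C" "tgt C g \<in> Ob C"
    using mor_ob assms(2,3) by blast+
  show ?thesis
    unfolding msum_def opposite_simps
    using comp_assoc[OF bpr1_hom[OF ob(1,3)] mor_hom[OF assms(2)] bin1_hom[OF ob(2,4)]]
      comp_assoc[OF bpr2_hom[OF ob(1,3)] mor_hom[OF assms(3)] bin2_hom[OF ob(2,4)]] by simp
qed

context weakly_exact_structure
begin

text \<open>Closure of \<open>\<W>\<close> under isomorphisms of sequences, read in the opposite category.\<close>

lemma W_iso_closed_opposite:
  assumes ke: "(k, e) \<in> W" and kc: "kc_pair C d' i'" and isos: "iso C a" "iso C b" "iso C c"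
    and a: "a \<in> Hom C (tgt C i') (tgt C e)" and b: "b \<in> Hom C (src C i') (src C e)"
    and c: "c \<in> Hom C (src C d') (src C k)" and c1: "e \<cdot> b = a \<cdot> i'" and c2: "k \<cdot> c = b \<cdot> d'"
  shows "(d', i') \<in> W"
proof -
  note hk = kernel_homs[OF W_kernel[OF ke]] and hk' = kernel_homs[OF kc[unfolded kc_pair_def, THEN conjunct1]]
  obtain a1 where a1: "a1 \<in> Hom C (tgt C e) (tgt C i')" "a1 \<cdot> a = idm C (tgt C i')" "a \<cdot> a1 = idm C (tgt C e)"
    using iso_inverse[OF isos(1) a] by blast
  obtain b1 where b1: "b1 \<in> Hom C (src C e) (src C i')" "b1 \<cdot> b = idm C (src C i')" "b \<cdot> b1 = idm C (src C e)"
    using iso_inverse[OF isos(2) b] by blast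
  obtain c1 where c1': "c1 \<in> Hom C (src C k) (src C d')" "c1 \<cdot> c = idm C (src C d')" "c \<cdot> c1 = idm C (src C k)"
    using iso_inverse[OF isos(3) c] by blast
  have tgt: "tgt C k = src C e" "tgt C d' = src C i'" using hk(1) hk'(1) hom_tgt by blast+
  show ?thesis
  proof (rule W_iso_closed[OF ke kc isoI[OF c1'(1) c c1'(3,2)] isoI[OF b1(1) b b1(3,2)]
        isoI[OF a1(1) a a1(3,2)] c1'(1)])
    show "b1 \<in> Hom C (tgt C k) (tgt C d')" using b1(1) tgt by simp
    show "a1 \<in> Hom C (tgt C e) (tgt C i')" by (rule a1(1))
    show "b1 \<cdot> k = d' \<cdot> c1"
      by (rule commuting_square_inverse[OF hk'(1) hk(1) c b c1'(1) c1'(3) b1(1) b1(2) c2])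
    show "a1 \<cdot> e = i' \<cdot> b1"
      by (rule commuting_square_inverse[OF hk'(2) hk(2) b a b1(1) b1(3) a1(1) a1(2) c1])
  qed
qed

end

lemma weakly_exact_opposite:
  assumes "additive_category C" "weakly_exact C W"
  shows "weakly_exact (opposite C) {(d, i). (i, d) \<in> W}"
proof -
  interpret weakly_exact_structure C W by (intro weakly_exact_structure.intro additive.intro
        weakly_exact_structure_axioms.intro assms)
  have sums: "\<forall>(i1, d1) \<in> W. \<forall>(i2, d2) \<in> W. (msum C i1 i2, msum C d1 d2) \<in> W"
    using assms(2) unfolding weakly_exact_def by (elim conjE) assumption
  have E0: "\<forall>A\<in>Ob C. adm_monic C W (idm C A)"
    using assms(2) unfolding weakly_exact_def by (elim conjE) assumption
  have E0op: "\<forall>A\<in>Ob C. adm_epic C W (idm C A)"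
    using assms(2) unfolding weakly_exact_def by (elim conjE) assumption
  have E2: "\<forall>i t. adm_monic C W i \<and> t \<in> Mor C \<and> src C t = src C i \<longrightarrow>
      (\<exists>t' j. is_pushout C i t t' j) \<and> (\<forall>t' j. is_pushout C i t t' j \<longrightarrow> adm_monic C W j)"
    using assms(2) unfolding weakly_exact_def by (elim conjE) assumption
  have E2op: "\<forall>h t. adm_epic C W h \<and> t \<in> Mor C \<and> tgt C t = tgt C h \<longrightarrow>
      (\<exists>q p. is_pullback C h t q p) \<and> (\<forall>q p. is_pullback C h t q p \<longrightarrow> adm_epic C W p)"
    using assms(2) unfolding weakly_exact_def by (elim conjE) assumption
  have sums_opposite: "(msum (opposite C) x1 x2, msum (opposite C) y1 y2) \<in> W"
    if "(x1, y1) \<in> W" "(x2, y2) \<in> W" for x1 x2 y1 y2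
    using bspec[OF bspec[OF sums that(1), unfolded case_prod_conv] that(2)]
      msum_opposite[OF assms(1)] W_kernel[OF that(1)] W_kernel[OF that(2)]
    unfolding is_kernel_def by simp
  show ?thesis
    unfolding weakly_exact_def
    apply (intro conjI)
    subgoal using W_kc_pair by auto
    subgoal by clarsimp (rule W_iso_closed_opposite)
    subgoal by clarsimp (rule sums_opposite)
    subgoal using E0op by simp
    subgoal using E0 by simp
    subgoal using E2op by simp
    subgoal using E2 by simp
    done
qed

lemma pushout_square_characterisation:
  assumes "additive_category C" "weakly_exact C W"
  shows "\<forall>A B A' B' i f f' i'.
       i \<in> Hom C A B \<and> f \<in> Hom C A A' \<and> f' \<in> Hom C B B' \<and> i' \<in> Hom C A' B' \<and>
       cmp C f' i = cmp C i' f \<and> adm_monic C W i \<and> adm_monic C W i' \<longrightarrow>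
       ((is_pushout C i f f' i' \<longleftrightarrow>
          (madd C (cmp C (bin1 C B A') i) (cmp C (bin2 C B A') (mneg C f)),
           madd C (cmp C f' (bpr1 C B A')) (cmp C i' (bpr2 C B A'))) \<in> W) \<and>
        (is_pushout C i f f' i' \<longleftrightarrow>
          is_pushout C i f f' i' \<and> is_pullback C f' i' i f) \<and>
        (is_pushout C i f f' i' \<longleftrightarrow>
          (\<exists>E p p'. p \<in> Hom C B E \<and> p' \<in> Hom C B' E \<and>
             (i, p) \<in> W \<and> (i', p') \<in> W \<and> cmp C p' f' = cmp C (idm C E) p)))"
    (is "\<forall>A B A' B' i f f' i'. ?square A B A' B' i f f' i' \<longrightarrow> ?equivalences A B A' B' i f f' i'")
proof (intro allI impI)
  fix A B A' B' i f f' i'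
  assume "?square A B A' B' i f f' i'"
  then interpret weakly_exact_square C A B A' B' i f f' i' W
    using assms by (intro weakly_exact_square.intro commutative_square.intro weakly_exact_structure.intro
        additive.intro commutative_square_axioms.intro weakly_exact_structure_axioms.intro) auto
  show "?equivalences A B A' B' i f f' i'"
    using pushout_square_equivalences \<open>?square A B A' B' i f f' i'\<close> by blast
qed

theorem mainTheorem1:
  fixes C :: "('o, 'm) addcat" and W :: "('m \<times> 'm) set"
  assumes "additive_category C" and "weakly_exact C W"
  shows
   "(\<forall>A B A' B' i f f' i'.
       i \<in> Hom C A B \<and> f \<in> Hom C A A' \<and> f' \<in> Hom C B B' \<and> i' \<in> Hom C A' B' \<and>
       cmp C f' i = cmp C i' f \<and> adm_monic C W i \<and> adm_monic C W i' \<longrightarrow>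
       ((is_pushout C i f f' i' \<longleftrightarrow>
          (madd C (cmp C (bin1 C B A') i) (cmp C (bin2 C B A') (mneg C f)),
           madd C (cmp C f' (bpr1 C B A')) (cmp C i' (bpr2 C B A'))) \<in> W) \<and>
        (is_pushout C i f f' i' \<longleftrightarrow>
          is_pushout C i f f' i' \<and> is_pullback C f' i' i f) \<and>
        (is_pushout C i f f' i' \<longleftrightarrow>
          (\<exists>E p p'. p \<in> Hom C B E \<and> p' \<in> Hom C B' E \<and>
             (i, p) \<in> W \<and> (i', p') \<in> W \<and> cmp C p' f' = cmp C (idm C E) p)))) \<and>
    (\<forall>A B A' B' d g g' d'.
       d \<in> Hom C B A \<and> g \<in> Hom C A' A \<and> g' \<in> Hom C B' B \<and> d' \<in> Hom C B' A' \<and>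
       cmp C d g' = cmp C g d' \<and> adm_epic C W d \<and> adm_epic C W d' \<longrightarrow>
       ((is_pullback C d g g' d' \<longleftrightarrow>
          (madd C (cmp C (bin1 C B A') g') (cmp C (bin2 C B A') d'),
           madd C (cmp C d (bpr1 C B A')) (cmp C (mneg C g) (bpr2 C B A'))) \<in> W) \<and>
        (is_pullback C d g g' d' \<longleftrightarrow>
          is_pullback C d g g' d' \<and> is_pushout C g' d' d g) \<and>
        (is_pullback C d g g' d' \<longleftrightarrow>
          (\<exists>K k k'. k \<in> Hom C K B \<and> k' \<in> Hom C K B' \<and>
             (k, d) \<in> W \<and> (k', d') \<in> W \<and> cmp C g' k' = cmp C k (idm C K)))))"
proof -
  note dual = pushout_square_characterisation[OF additive_opposite[OF assms(1)] weakly_exact_opposite[OF assms]]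
  show ?thesis
    by (rule conjI[OF pushout_square_characterisation[OF assms]
          dual[unfolded opposite_simps Hom_opposite is_pushout_opposite is_pullback_opposite
            adm_monic_opposite mem_Collect_eq case_prod_conv]])
qed

end
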